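(* For $j=0,\dots,n$, $$\varphi(y_j)=\sum_{i=0}^{\min(j,n-j)}2^{2i}\binom{n-2i}{j-i}\,p_i.$$
   Context: $B_n$: signed permutations $w=w_1\dots w_n$, values ordered $\cdots<-2<-1<1<2<\cdots$, $w_0=0$; $\mathrm{Des}(w)=\{i\in\{0,\dots,n-1\}:w_i>w_{i+1}\}$. $y_j=\sum_{w\in B_n,\ \#\mathrm{Des}(w)=j}w$. $\varphi$: linear extension of $w\mapsto|w_1|\dots|w_n|$ from $\mathbb{Q}B_n$ to $\mathbb{Q}\mathfrak{S}_n$. For $u\in\mathfrak{S}_n$, $\mathrm{Peak}(u)=\{i\in[n-1]:u_{i-1}<u_i>u_{i+1}\}$ with $u_0=0$, and $p_i=\sum_{u\in\mathfrak{S}_n,\ \#\mathrm{Peak}(u)=i}u$ for $0\le i\le\lfloor n/2\rfloor$. *)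

theory Defs
  imports Complex_Main "HOL-Library.Function_Algebras"
begin

(* Elements of the group algebras Q B_n and Q S_n are represented as coefficient
   functions: signed permutations are int lists w = [w_1,...,w_n], permutations are
   nat lists u = [u_1,...,u_n]. *)

definition perms :: "nat \<Rightarrow> nat list set" where
  "perms n = {u. distinct u \<and> set u = {1..n}}"

definition signed_perms :: "nat \<Rightarrow> int list set" where
  "signed_perms n = {w. 0 \<notin> set w \<and> map (\<lambda>x. nat \<bar>x\<bar>) w \<in> perms n}"

definition basis :: "'a \<Rightarrow> 'a \<Rightarrow> rat" where
  "basis g = (\<lambda>h. if h = g then 1 else 0)"

definition sdes :: "int list \<Rightarrow> nat set" where
  "sdes w = {i \<in> {0..<length w}. (0 # w) ! i > (0 # w) ! (i + 1)}"

definition peak :: "nat list \<Rightarrow> nat set" where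
  "peak u = {i \<in> {1..<length u}.
     (0 # u) ! (i - 1) < (0 # u) ! i \<and> (0 # u) ! i > (0 # u) ! (i + 1)}"

definition y :: "nat \<Rightarrow> nat \<Rightarrow> int list \<Rightarrow> rat" where
  "y n j = (\<Sum>w\<in>{w \<in> signed_perms n. card (sdes w) = j}. basis w)"

definition phi :: "nat \<Rightarrow> (int list \<Rightarrow> rat) \<Rightarrow> nat list \<Rightarrow> rat" where
  "phi n f = (\<Sum>w\<in>signed_perms n. (\<lambda>u. f w * basis (map (\<lambda>x. nat \<bar>x\<bar>) w) u))"

definition p :: "nat \<Rightarrow> nat \<Rightarrow> nat list \<Rightarrow> rat" where
  "p n i = (\<Sum>u\<in>{u \<in> perms n. card (peak u) = i}. basis u)"

end

theory Submission
  imports Defs "HOL-Computational_Algebra.Polynomial"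
begin

(*
  Fix u in S_n. The signed permutations over u arise by negating the letters at a set B of
  positions. A descent at the gap before a negated letter occurs iff that letter exceeds its left
  neighbour (with u_0 = 0), a descent at the gap after a positive letter occurs iff that letter
  exceeds its right neighbour, and every descent arises in exactly one of these ways. Hence the
  descent generating function of the fibre of u is the product over the letters of x^a + x^b,
  where a, b in {0, 1} record whether the letter exceeds its left resp. right neighbour: a peak
  contributes 2x, a letter exceeding neither neighbour 2, any other letter 1 + x. Every one of the
  n gaps of 0 u_1 ... u_n is either an ascent or a descent, so the a's and b's sum to n; this forces
  as many letters of the second kind as there are peaks. With P peaks the product is therefore
  4^P x^P (1 + x)^(n - 2P), and its coefficient of x^j is the multiplicity of u in phi(y_j).
*)

lemma sum_apply: "(\<Sum>x\<in>A. f x) z = (\<Sum>x\<in>A. f x z)"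
  by (induction A rule: infinite_finite_induct) auto

lemma card_filter_bij_betw:
  assumes "bij_betw f A B"
  shows "card {b \<in> B. Q b} = card {a \<in> A. Q (f a)}"
proof -
  have "{b \<in> B. Q b} = f ` {a \<in> A. Q (f a)}"
    using assms by (auto simp: bij_betw_def)
  moreover have "inj_on f {a \<in> A. Q (f a)}"
    using assms by (auto simp: bij_betw_def intro: inj_on_subset)
  ultimately show ?thesis
    by (simp add: card_image)
qed

lemma prod_monom_1: "(\<Prod>x\<in>A. monom 1 (f x)) = (monom 1 (\<Sum>x\<in>A. f x) :: 'a::comm_semiring_1 poly)"
  by (induction A rule: infinite_finite_induct) (simp_all add: mult_monom)

lemma coeff_prod_monom_add:
  fixes f g :: "'a \<Rightarrow> nat"
  assumes "finite A"
  shows "coeff (\<Prod>x\<in>A. monom 1 (f x) + monom 1 (g x) :: nat poly) k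
           = card {X \<in> Pow A. (\<Sum>x\<in>X. f x) + (\<Sum>x\<in>A - X. g x) = k}"
proof -
  have "(\<Prod>x\<in>A. monom 1 (f x) + monom 1 (g x) :: nat poly)
      = (\<Sum>X\<in>Pow A. monom 1 ((\<Sum>x\<in>X. f x) + (\<Sum>x\<in>A - X. g x)))"
    unfolding prod_add[OF assms] prod_monom_1 mult_monom by simp
  then show ?thesis
    using assms by (simp add: coeff_sum sum.If_cases Int_def)
qed

lemma coeff_one_plus_X_power: "coeff ([:1, 1:] ^ k :: nat poly) i = k choose i"
proof (cases "i \<le> k")
  case True
  then show ?thesis
    by (simp add: coeff_linear_poly_power)
next
  case False
  have "degree ([:1, 1:] ^ k :: nat poly) \<le> k"
    using degree_power_le[of "[:1, 1:] :: nat poly" k] by simp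
  with False show ?thesis
    by (simp add: coeff_eq_0)
qed

lemma coeff_monom_mult_one_plus_X_power:
  "coeff (monom c m * [:1, 1:] ^ k :: nat poly) j = (if j < m then 0 else c * (k choose (j - m)))"
  unfolding coeff_monom_mult coeff_one_plus_X_power by simp

lemma prod_monom_of_bool:
  fixes a b :: "'a \<Rightarrow> bool"
  assumes "finite A" and balanced: "(\<Sum>x\<in>A. of_bool (a x) + of_bool (b x)) = card A"
  defines "P \<equiv> card {x \<in> A. a x \<and> b x}"
  shows "(\<Prod>x\<in>A. monom 1 (of_bool (a x)) + monom 1 (of_bool (b x)) :: nat poly)
           = monom (2 ^ (2 * P)) P * [:1, 1:] ^ (card A - 2 * P)"
proof -
  define both one none :: nat where
    "both = (\<Sum>x\<in>A. of_bool (a x \<and> b x))" and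
    "one = (\<Sum>x\<in>A. of_bool (a x \<noteq> b x))" and
    "none = (\<Sum>x\<in>A. of_bool (\<not> a x \<and> \<not> b x))"
  have factor: "monom 1 (of_bool (a x)) + monom 1 (of_bool (b x))
      = monom 2 1 ^ of_bool (a x \<and> b x) * [:1, 1:] ^ of_bool (a x \<noteq> b x)
        * monom 2 0 ^ of_bool (\<not> a x \<and> \<not> b x)" for x
    by (cases "a x"; cases "b x") (simp_all add: add_monom monom_Suc monom_0 one_pCons)
  have "both + one + none = card A"
    unfolding both_def one_def none_def card_eq_sum sum.distrib[symmetric]
    by (intro sum.cong) auto
  moreover have "2 * both + one = card A"
    unfolding balanced[symmetric] both_def one_def sum_distrib_left sum.distrib[symmetric]
    by (intro sum.cong) auto
  moreover have "both = P"
    using assms(1) by (simp add: both_def P_def Int_def)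
  ultimately have "none = P" and "one = card A - 2 * P"
    by auto
  have "(\<Prod>x\<in>A. monom 1 (of_bool (a x)) + monom 1 (of_bool (b x)) :: nat poly)
      = monom 2 1 ^ both * [:1, 1:] ^ one * monom 2 0 ^ none"
    unfolding factor both_def one_def none_def by (simp add: prod.distrib power_sum)
  also have "\<dots> = (monom 2 1 ^ P * monom 2 0 ^ P) * [:1, 1:] ^ (card A - 2 * P)"
    using \<open>both = P\<close> \<open>none = P\<close> \<open>one = card A - 2 * P\<close> by (simp only: mult_ac)
  also have "monom 2 1 ^ P * monom 2 0 ^ P = (monom (2 ^ (2 * P)) P :: nat poly)"
    by (simp add: monom_power mult_monom power_add[symmetric] mult_2)
  finally show ?thesis .
qed

lemma sum_basis_apply: "finite S \<Longrightarrow> (\<Sum>x\<in>S. basis x) u = of_bool (u \<in> S)"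
  by (simp add: sum_apply basis_def eq_commute)

lemma length_perms: "u \<in> perms n \<Longrightarrow> length u = n"
  unfolding perms_def by (auto dest: distinct_card)

lemma distinct_Cons_0_perms: "u \<in> perms n \<Longrightarrow> distinct (0 # u)"
  by (simp add: perms_def)

lemma finite_perms: "finite (perms n)"
proof (rule finite_subset)
  show "perms n \<subseteq> {u. set u \<subseteq> {1..n} \<and> length u = n}"
    using length_perms unfolding perms_def by auto
qed (rule finite_lists_length_eq, simp)

lemma finite_signed_perms: "finite (signed_perms n)"
proof (rule finite_subset)
  show "signed_perms n \<subseteq> {w. set w \<subseteq> {-int n..int n} \<and> length w = n}"
  proof safe
    fix w assume "w \<in> signed_perms n"
    then have abs_w: "map (\<lambda>x. nat \<bar>x\<bar>) w \<in> perms n"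
      unfolding signed_perms_def by simp
    then show "length w = n"
      using length_perms by fastforce
    fix x assume "x \<in> set w"
    with abs_w have "nat \<bar>x\<bar> \<le> n"
      unfolding perms_def by auto
    then show "x \<in> {-int n..int n}" by auto
  qed
qed (rule finite_lists_length_eq, simp)

lemma p_apply: "p n i u = of_bool (u \<in> perms n \<and> card (peak u) = i)"
  using finite_perms by (simp add: p_def sum_basis_apply)

lemma phi_y_apply:
  "phi n (y n j) u = of_nat (card {w \<in> signed_perms n. map (\<lambda>x. nat \<bar>x\<bar>) w = u \<and> card (sdes w) = j})"
proof -
  have "y n j w = of_bool (w \<in> signed_perms n \<and> card (sdes w) = j)" for w
    using finite_signed_perms by (simp add: y_def sum_basis_apply)
  then have "phi n (y n j) u
      = (\<Sum>w\<in>signed_perms n. of_bool (map (\<lambda>x. nat \<bar>x\<bar>) w = u \<and> card (sdes w) = j))"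
    unfolding phi_def sum_apply by (intro sum.cong) (auto simp: basis_def)
  then show ?thesis
    using finite_signed_perms by (simp add: Int_def conj_commute)
qed

lemma signed_perms_fibre:
  "u \<in> perms n \<Longrightarrow> {w \<in> signed_perms n. map (\<lambda>x. nat \<bar>x\<bar>) w = u}
     = {w. 0 \<notin> set w \<and> map (\<lambda>x. nat \<bar>x\<bar>) w = u}"
  unfolding signed_perms_def by auto

definition sign_by :: "nat set \<Rightarrow> nat list \<Rightarrow> int list" where
  "sign_by B u = map (\<lambda>t. if t \<in> B then - int (u ! t) else int (u ! t)) [0..<length u]"

lemma length_sign_by [simp]: "length (sign_by B u) = length u"
  by (simp add: sign_by_def)

lemma nth_sign_by [simp]:
  "t < length u \<Longrightarrow> sign_by B u ! t = (if t \<in> B then - int (u ! t) else int (u ! t))"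
  by (simp add: sign_by_def)

lemma bij_betw_sign_by:
  assumes "0 \<notin> set u"
  shows "bij_betw (\<lambda>B. sign_by B u) (Pow {..<length u})
           {w. 0 \<notin> set w \<and> map (\<lambda>x. nat \<bar>x\<bar>) w = u}"
proof (rule bij_betw_byWitness[where f' = "\<lambda>w. {t. t < length w \<and> w ! t < 0}"])
  have nonzero: "u ! t \<noteq> 0" if "t < length u" for t
    using assms that by (metis nth_mem)
  show "\<forall>B\<in>Pow {..<length u}. {t. t < length (sign_by B u) \<and> sign_by B u ! t < 0} = B"
    using nonzero by (auto split: if_splits)
  show "\<forall>w\<in>{w. 0 \<notin> set w \<and> map (\<lambda>x. nat \<bar>x\<bar>) w = u}.
          sign_by {t. t < length w \<and> w ! t < 0} u = w"
  proof safe
    fix w :: "int list" assume "0 \<notin> set w" and "u = map (\<lambda>x. nat \<bar>x\<bar>) w"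
    then show "sign_by {t. t < length w \<and> w ! t < 0} (map (\<lambda>x. nat \<bar>x\<bar>) w) = w"
      by (intro nth_equalityI) auto
  qed
  show "(\<lambda>B. sign_by B u) ` Pow {..<length u} \<subseteq> {w. 0 \<notin> set w \<and> map (\<lambda>x. nat \<bar>x\<bar>) w = u}"
    by (auto simp: in_set_conv_nth nonzero split: if_splits intro!: nth_equalityI)
  show "(\<lambda>w. {t. t < length w \<and> w ! t < 0}) ` {w. 0 \<notin> set w \<and> map (\<lambda>x. nat \<bar>x\<bar>) w = u}
          \<subseteq> Pow {..<length u}"
    by auto
qed

definition exceeds_left :: "nat list \<Rightarrow> nat \<Rightarrow> bool" where
  "exceeds_left u t \<longleftrightarrow> (0 # u) ! t < u ! t"

definition exceeds_right :: "nat list \<Rightarrow> nat \<Rightarrow> bool" where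
  "exceeds_right u t \<longleftrightarrow> Suc t < length u \<and> u ! Suc t < u ! t"

lemma signed_less_iff:
  fixes a b :: nat
  assumes "a \<noteq> b"
  shows "(if neg_b then - int b else int b) < (if neg_a then - int a else int a)
           \<longleftrightarrow> a < b \<and> neg_b \<or> b < a \<and> \<not> neg_a"
  using assms by (cases neg_a; cases neg_b) auto

lemma sdes_sign_by:
  assumes "distinct (0 # u)" and "B \<subseteq> {..<length u}"
  shows "sdes (sign_by B u)
           = {t \<in> B. exceeds_left u t} \<union> Suc ` {t \<in> {..<length u} - B. exceeds_right u t}"
proof (rule set_eqI)
  fix i
  show "i \<in> sdes (sign_by B u)
          \<longleftrightarrow> i \<in> {t \<in> B. exceeds_left u t} \<union> Suc ` {t \<in> {..<length u} - B. exceeds_right u t}"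
  proof (cases i)
    case 0
    have "length u > 0 \<Longrightarrow> u ! 0 \<noteq> 0"
      using assms(1) by (metis distinct.simps(2) nth_mem)
    then show ?thesis
      using 0 assms(2) by (auto simp: sdes_def exceeds_left_def split: if_splits)
  next
    case (Suc t)
    have "Suc t < length u \<Longrightarrow> u ! t \<noteq> u ! Suc t"
      using assms(1) by (simp add: nth_eq_iff_index_eq)
    then show ?thesis
      using Suc assms(2) signed_less_iff[of "u ! t" "u ! Suc t"]
      by (auto simp: sdes_def exceeds_left_def exceeds_right_def)
  qed
qed

lemma card_sdes_sign_by:
  assumes "distinct (0 # u)" and "B \<subseteq> {..<length u}"
  shows "card (sdes (sign_by B u))
           = (\<Sum>t\<in>B. of_bool (exceeds_left u t)) + (\<Sum>t\<in>{..<length u} - B. of_bool (exceeds_right u t))"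
proof -
  have finite_B: "finite B"
    using assms(2) finite_subset by blast
  have "{t \<in> B. exceeds_left u t} \<inter> Suc ` {t \<in> {..<length u} - B. exceeds_right u t} = {}"
    by (auto simp: exceeds_left_def exceeds_right_def)
  then have "card (sdes (sign_by B u))
      = card {t \<in> B. exceeds_left u t} + card {t \<in> {..<length u} - B. exceeds_right u t}"
    using finite_B by (simp add: sdes_sign_by[OF assms] card_Un_disjoint card_image)
  then show ?thesis
    using finite_B by (simp add: Int_def)
qed

lemma exceeds_left_right_balanced:
  assumes "distinct (0 # u)"
  shows "(\<Sum>t<length u. of_bool (exceeds_left u t) + of_bool (exceeds_right u t)) = length u"
proof (cases "length u")
  case 0
  then show ?thesis by simp
next
  case (Suc m)
  have "u ! 0 \<noteq> 0"
    using assms Suc by (metis distinct.simps(2) nth_mem zero_less_Suc)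
  then have "exceeds_left u 0"
    by (simp add: exceeds_left_def)
  then have left: "(\<Sum>t<Suc m. of_bool (exceeds_left u t))
      = 1 + (\<Sum>t<m. of_bool (exceeds_left u (Suc t)) :: nat)"
    unfolding sum.lessThan_Suc_shift by simp
  have "\<not> exceeds_right u m"
    using Suc by (simp add: exceeds_right_def)
  then have right: "(\<Sum>t<Suc m. of_bool (exceeds_right u t)) = (\<Sum>t<m. of_bool (exceeds_right u t) :: nat)"
    unfolding sum.lessThan_Suc by simp
  have "of_bool (exceeds_right u t) + of_bool (exceeds_left u (Suc t)) = (1::nat)"
    if "t < m" for t
  proof -
    have "u ! t \<noteq> u ! Suc t"
      using assms that Suc by (simp add: nth_eq_iff_index_eq)
    then show ?thesis
      using that Suc by (auto simp: exceeds_left_def exceeds_right_def)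
  qed
  then have "(\<Sum>t<m. of_bool (exceeds_right u t) + of_bool (exceeds_left u (Suc t))) = (\<Sum>t<m. 1::nat)"
    by (intro sum.cong) simp_all
  then show ?thesis
    unfolding Suc sum.distrib left right by (simp add: sum.distrib)
qed

lemma peak_eq_exceeds_left_right:
  "peak u = Suc ` {t \<in> {..<length u}. exceeds_left u t \<and> exceeds_right u t}"
  unfolding peak_def exceeds_left_def exceeds_right_def
  by (auto simp: image_iff gr0_conv_Suc Suc_le_eq)

lemma card_peak: "card (peak u) = card {t \<in> {..<length u}. exceeds_left u t \<and> exceeds_right u t}"
  by (simp add: peak_eq_exceeds_left_right card_image)

lemma double_card_peak_le:
  assumes "distinct (0 # u)"
  shows "2 * card (peak u) \<le> length u"
proof -
  have "2 * card (peak u) = (\<Sum>t<length u. 2 * of_bool (exceeds_left u t \<and> exceeds_right u t))"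
    by (simp add: card_peak sum_distrib_left[symmetric] Int_def)
  also have "\<dots> \<le> (\<Sum>t<length u. of_bool (exceeds_left u t) + of_bool (exceeds_right u t))"
    by (intro sum_mono) simp
  also have "\<dots> = length u"
    using exceeds_left_right_balanced[OF assms] .
  finally show ?thesis .
qed

lemma card_sdes_fibre:
  assumes "u \<in> perms n"
  defines "P \<equiv> card (peak u)"
  shows "card {w \<in> signed_perms n. map (\<lambda>x. nat \<bar>x\<bar>) w = u \<and> card (sdes w) = j}
           = (if j < P then 0 else 2 ^ (2 * P) * ((n - 2 * P) choose (j - P)))"
proof -
  have distinct: "distinct (0 # u)"
    using assms(1) by (rule distinct_Cons_0_perms)
  have length: "length u = n"
    using assms(1) by (rule length_perms)
  have balanced: "(\<Sum>t<n. of_bool (exceeds_left u t) + of_bool (exceeds_right u t)) = card {..<n}"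
    using exceeds_left_right_balanced[OF distinct] length by simp
  have "card {w \<in> signed_perms n. map (\<lambda>x. nat \<bar>x\<bar>) w = u \<and> card (sdes w) = j}
      = card {w \<in> {w. 0 \<notin> set w \<and> map (\<lambda>x. nat \<bar>x\<bar>) w = u}. card (sdes w) = j}"
    unfolding signed_perms_fibre[OF assms(1), symmetric] by (simp add: conj_ac)
  also have "\<dots> = card {B \<in> Pow {..<n}. card (sdes (sign_by B u)) = j}"
    unfolding length[symmetric]
    by (rule card_filter_bij_betw[OF bij_betw_sign_by]) (use distinct in simp)
  also have "\<dots> = card {B \<in> Pow {..<n}. (\<Sum>t\<in>B. of_bool (exceeds_left u t))
                      + (\<Sum>t\<in>{..<n} - B. of_bool (exceeds_right u t)) = j}"
    using card_sdes_sign_by[OF distinct] length by (intro arg_cong[where f = card] Collect_cong) auto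
  also have "\<dots> = coeff (\<Prod>t<n. monom 1 (of_bool (exceeds_left u t))
                                + monom 1 (of_bool (exceeds_right u t)) :: nat poly) j"
    by (rule coeff_prod_monom_add[symmetric]) simp
  also have "\<dots> = coeff (monom (2 ^ (2 * P)) P * [:1, 1:] ^ (n - 2 * P)) j"
    unfolding prod_monom_of_bool[OF finite_lessThan balanced] card_lessThan P_def card_peak length ..
  finally show ?thesis
    unfolding coeff_monom_mult_one_plus_X_power .
qed

theorem proposition6p2:
  fixes n j :: nat
  assumes "j \<le> n"
  shows "phi n (y n j) =
    (\<Sum>i = 0..min j (n - j). (\<lambda>u. of_nat (2 ^ (2 * i) * ((n - 2 * i) choose (j - i))) * p n i u))"
proof
  fix u
  show "phi n (y n j) u
      = (\<Sum>i = 0..min j (n - j). (\<lambda>u. of_nat (2 ^ (2 * i) * ((n - 2 * i) choose (j - i))) * p n i u)) u"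
  proof (cases "u \<in> perms n")
    case False
    then have no_fibre: "{w \<in> signed_perms n. map (\<lambda>x. nat \<bar>x\<bar>) w = u \<and> card (sdes w) = j} = {}"
      by (auto simp: signed_perms_def)
    show ?thesis
      unfolding phi_y_apply no_fibre using False by (simp add: sum_apply p_apply)
  next
    case True
    define P where "P = card (peak u)"
    have "2 * P \<le> n"
      using double_card_peak_le[OF distinct_Cons_0_perms[OF True]] length_perms[OF True]
      by (simp add: P_def)
    then have "j < P \<or> P \<le> min j (n - j) \<or> n - 2 * P < j - P"
      by linarith
    then show ?thesis
      using True
      by (auto simp: phi_y_apply sum_apply p_apply card_sdes_fibre P_def[symmetric] binomial_eq_0)
  qed
qed

end
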